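(* Let $q$ be a prime power, let $R$ be a finite local ring containing the field $\mathbb{F}_q$ as a subring, let $R^*$ be its set of units, $\delta=\dim_{\mathbb{F}_q}(R\setminus R^* )$, and let $F=R/(R\setminus R^* )$ (a field containing $\mathbb{F}_q$ via the quotient map). If the chain geometry $\Sigma(\mathbb{F}_q,F)$ contains a blocking set of size $x$, then $\Sigma(\mathbb{F}_q,R)$ contains a blocking set of size $xq^{\delta}$.
   Context: All rings are associative with unit element $1\neq 0$, and subrings share the unit. For a ring $S$, $S^2$ is regarded as a left $S$-module and the projective line $\mathbb{P}(S)$ is the set of all submodules of $S^2$ of the form $S(a,b)$ where $(a\ b)$ is the first row of some invertible $2\times 2$ matrix over $S$. For a field $K\subseteq S$ (as a subring), $\mathbb{P}(K)$ is embedded in $\mathbb{P}(S)$ via $K(a,b)\mapsto S(a,b)$. The chain geometry $\Sigma(K,S)$ has point set $\mathbb{P}(S)$ and its blocks, called chains, are the sets $\mathbb{P}(K)^g$ with $g\in\mathrm{GL}_2(S)$. A blocking set is a set $B$ of points such that every chain contains at least one element of $B$. *)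

theory Defs
  imports "HOL-Algebra.Algebra" "HOL-Computational_Algebra.Primes"
begin

definition local_ring :: "('a, 'b) ring_scheme \<Rightarrow> bool" where
  "local_ring R \<longleftrightarrow> ring R \<and> \<one>\<^bsub>R\<^esub> \<noteq> \<zero>\<^bsub>R\<^esub> \<and>
     ideal (carrier R - Units R) R"

definition invertible2 :: "('a, 'b) ring_scheme \<Rightarrow> 'a set \<Rightarrow> 'a \<Rightarrow> 'a \<Rightarrow> 'a \<Rightarrow> 'a \<Rightarrow> bool" where
  "invertible2 S A a b c d \<longleftrightarrow> a \<in> A \<and> b \<in> A \<and> c \<in> A \<and> d \<in> A \<and>
     (\<exists>a' \<in> A. \<exists>b' \<in> A. \<exists>c' \<in> A. \<exists>d' \<in> A.
        a \<otimes>\<^bsub>S\<^esub> a' \<oplus>\<^bsub>S\<^esub> b \<otimes>\<^bsub>S\<^esub> c' = \<one>\<^bsub>S\<^esub> \<and>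
        a \<otimes>\<^bsub>S\<^esub> b' \<oplus>\<^bsub>S\<^esub> b \<otimes>\<^bsub>S\<^esub> d' = \<zero>\<^bsub>S\<^esub> \<and>
        c \<otimes>\<^bsub>S\<^esub> a' \<oplus>\<^bsub>S\<^esub> d \<otimes>\<^bsub>S\<^esub> c' = \<zero>\<^bsub>S\<^esub> \<and>
        c \<otimes>\<^bsub>S\<^esub> b' \<oplus>\<^bsub>S\<^esub> d \<otimes>\<^bsub>S\<^esub> d' = \<one>\<^bsub>S\<^esub> \<and>
        a' \<otimes>\<^bsub>S\<^esub> a \<oplus>\<^bsub>S\<^esub> b' \<otimes>\<^bsub>S\<^esub> c = \<one>\<^bsub>S\<^esub> \<and>
        a' \<otimes>\<^bsub>S\<^esub> b \<oplus>\<^bsub>S\<^esub> b' \<otimes>\<^bsub>S\<^esub> d = \<zero>\<^bsub>S\<^esub> \<and>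
        c' \<otimes>\<^bsub>S\<^esub> a \<oplus>\<^bsub>S\<^esub> d' \<otimes>\<^bsub>S\<^esub> c = \<zero>\<^bsub>S\<^esub> \<and>
        c' \<otimes>\<^bsub>S\<^esub> b \<oplus>\<^bsub>S\<^esub> d' \<otimes>\<^bsub>S\<^esub> d = \<one>\<^bsub>S\<^esub>)"

definition admissible :: "('a, 'b) ring_scheme \<Rightarrow> 'a set \<Rightarrow> 'a \<Rightarrow> 'a \<Rightarrow> bool" where
  "admissible S A a b \<longleftrightarrow> (\<exists>c d. invertible2 S A a b c d)"

definition lspan :: "('a, 'b) ring_scheme \<Rightarrow> 'a \<Rightarrow> 'a \<Rightarrow> ('a \<times> 'a) set" where
  "lspan S a b = {(s \<otimes>\<^bsub>S\<^esub> a, s \<otimes>\<^bsub>S\<^esub> b) | s. s \<in> carrier S}"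

definition proj_line :: "('a, 'b) ring_scheme \<Rightarrow> ('a \<times> 'a) set set" where
  "proj_line S = {lspan S a b | a b. admissible S (carrier S) a b}"

definition GL2 :: "('a, 'b) ring_scheme \<Rightarrow> ('a \<times> 'a \<times> 'a \<times> 'a) set" where
  "GL2 S = {(g11, g12, g21, g22) | g11 g12 g21 g22. invertible2 S (carrier S) g11 g12 g21 g22}"

text \<open>The image P(K)^g of the embedded projective line P(K) under g (acting on
  row vectors from the right): S(a,b) with K(a,b) in P(K) goes to S((a,b)g).\<close>
definition chain_of :: "('a, 'b) ring_scheme \<Rightarrow> 'a set \<Rightarrow> ('a \<times> 'a \<times> 'a \<times> 'a) \<Rightarrow> ('a \<times> 'a) set set" where
  "chain_of S K g = (case g of (g11, g12, g21, g22) \<Rightarrow>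
     {lspan S (a \<otimes>\<^bsub>S\<^esub> g11 \<oplus>\<^bsub>S\<^esub> b \<otimes>\<^bsub>S\<^esub> g21) (a \<otimes>\<^bsub>S\<^esub> g12 \<oplus>\<^bsub>S\<^esub> b \<otimes>\<^bsub>S\<^esub> g22)
       | a b. admissible S K a b})"

definition chains :: "('a, 'b) ring_scheme \<Rightarrow> 'a set \<Rightarrow> ('a \<times> 'a) set set set" where
  "chains S K = chain_of S K ` GL2 S"

definition blocking_set :: "('a, 'b) ring_scheme \<Rightarrow> 'a set \<Rightarrow> ('a \<times> 'a) set set \<Rightarrow> bool" where
  "blocking_set S K B \<longleftrightarrow> B \<subseteq> proj_line S \<and> (\<forall>C \<in> chains S K. C \<inter> B \<noteq> {})"

definition prime_power :: "nat \<Rightarrow> bool" where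
  "prime_power q \<longleftrightarrow> (\<exists>p n. Factorial_Ring.prime (p::nat) \<and> n > 0 \<and> q = p ^ n)"

end

theory Submission
  imports Defs "HOL-Algebra.Embedded_Algebras"
begin

text \<open>
  Let \<open>I\<close> be the set of non-units of \<open>R\<close> and \<open>F = R/I\<close>. The residue map \<open>R \<rightarrow> F\<close> sends
  \<open>P(R)\<close> onto \<open>P(F)\<close> and the chain \<open>P(F\<^sub>q)\<^sup>g\<close> onto the chain \<open>P(F\<^sub>q)\<^sup>h\<close>, where \<open>h\<close> is the
  residue of \<open>g\<close>. A point of a blocking set \<open>B\<close> of \<open>\<Sigma>(F\<^sub>q, F)\<close> on the latter chain is the first
  row of \<open>k h\<close> for some \<open>k \<in> GL\<^sub>2(F\<^sub>q)\<close>; since \<open>F\<^sub>q\<close> embeds into \<open>F\<close>, \<open>k\<close> lifts, and the first row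
  of \<open>k g\<close> is a point of \<open>P(F\<^sub>q)\<^sup>g\<close> above it. Hence the full preimage of \<open>B\<close> is a blocking
  set of \<open>\<Sigma>(F\<^sub>q, R)\<close>. Every point of \<open>P(F)\<close> has exactly \<open>|I| = q\<^sup>\<delta>\<close> preimages: up to
  swapping the coordinates it is the residue of \<open>R(1, c)\<close>, and its preimages are the points
  \<open>R(1, x)\<close> with \<open>x \<in> c + I\<close>.
\<close>

section \<open>Two-by-two matrices over a ring\<close>

type_synonym 'a mat2 = "'a \<times> 'a \<times> 'a \<times> 'a"

fun mat2_mult :: "('a, 'b) ring_scheme \<Rightarrow> 'a mat2 \<Rightarrow> 'a mat2 \<Rightarrow> 'a mat2" where
  "mat2_mult S (a, b, c, d) (a', b', c', d') =
     (a \<otimes>\<^bsub>S\<^esub> a' \<oplus>\<^bsub>S\<^esub> b \<otimes>\<^bsub>S\<^esub> c', a \<otimes>\<^bsub>S\<^esub> b' \<oplus>\<^bsub>S\<^esub> b \<otimes>\<^bsub>S\<^esub> d',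
      c \<otimes>\<^bsub>S\<^esub> a' \<oplus>\<^bsub>S\<^esub> d \<otimes>\<^bsub>S\<^esub> c', c \<otimes>\<^bsub>S\<^esub> b' \<oplus>\<^bsub>S\<^esub> d \<otimes>\<^bsub>S\<^esub> d')"

definition mat2_one :: "('a, 'b) ring_scheme \<Rightarrow> 'a mat2" where
  "mat2_one S = (\<one>\<^bsub>S\<^esub>, \<zero>\<^bsub>S\<^esub>, \<zero>\<^bsub>S\<^esub>, \<one>\<^bsub>S\<^esub>)"

fun mat2_map :: "('a \<Rightarrow> 'c) \<Rightarrow> 'a mat2 \<Rightarrow> 'c mat2" where
  "mat2_map h (a, b, c, d) = (h a, h b, h c, h d)"

definition mat2_over :: "'a set \<Rightarrow> 'a mat2 set" where
  "mat2_over A = A \<times> A \<times> A \<times> A"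

lemma mem_mat2_over [simp]: "(a, b, c, d) \<in> mat2_over A \<longleftrightarrow> a \<in> A \<and> b \<in> A \<and> c \<in> A \<and> d \<in> A"
  by (simp add: mat2_over_def)

lemma mat2_over_mono: "A \<subseteq> B \<Longrightarrow> mat2_over A \<subseteq> mat2_over B"
  by (auto simp: mat2_over_def)

definition invertible_mat2 :: "('a, 'b) ring_scheme \<Rightarrow> 'a set \<Rightarrow> 'a mat2 \<Rightarrow> bool" where
  "invertible_mat2 S A M \<longleftrightarrow> (case M of (a, b, c, d) \<Rightarrow> invertible2 S A a b c d)"

lemma invertible_mat2_iff:
  "invertible_mat2 S A M \<longleftrightarrow> M \<in> mat2_over A \<and>
     (\<exists>M' \<in> mat2_over A. mat2_mult S M M' = mat2_one S \<and> mat2_mult S M' M = mat2_one S)"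
  by (cases M) (auto simp: invertible_mat2_def invertible2_def mat2_one_def mat2_over_def)

lemma invertible_mat2_carrier: "invertible_mat2 S A M \<Longrightarrow> M \<in> mat2_over A"
  by (simp add: invertible_mat2_iff)

lemma invertible_mat2_mono: "A \<subseteq> B \<Longrightarrow> invertible_mat2 S A M \<Longrightarrow> invertible_mat2 S B M"
  unfolding invertible_mat2_iff using mat2_over_mono by blast

lemma admissible_iff_invertible_mat2: "admissible S A a b \<longleftrightarrow> (\<exists>c d. invertible_mat2 S A (a, b, c, d))"
  by (simp add: admissible_def invertible_mat2_def)

lemma GL2_eq_invertible_mat2: "GL2 S = {M. invertible_mat2 S (carrier S) M}"
  by (auto simp: GL2_def invertible_mat2_def)

lemma mat2_over_image: "mat2_over (h ` A) = mat2_map h ` mat2_over A"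
  by (auto simp: mat2_over_def image_iff)

lemma inj_on_mat2_map: "inj_on h A \<Longrightarrow> inj_on (mat2_map h) (mat2_over A)"
  by (auto simp: mat2_over_def inj_on_def)

context ring
begin

lemma mat2_mult_closed:
  assumes "subring A R" "M \<in> mat2_over A" "N \<in> mat2_over A"
  shows "mat2_mult R M N \<in> mat2_over A"
  using assms subringE(6,7)[OF assms(1)] by (cases M; cases N) auto

lemma mat2_one_closed: "subring A R \<Longrightarrow> mat2_one R \<in> mat2_over A"
  by (simp add: mat2_one_def subringE(2,3))

lemma mat2_mult_assoc:
  assumes "M \<in> mat2_over (carrier R)" "N \<in> mat2_over (carrier R)" "P \<in> mat2_over (carrier R)"
  shows "mat2_mult R (mat2_mult R M N) P = mat2_mult R M (mat2_mult R N P)"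
  using assms by (cases M; cases N; cases P) (simp add: l_distr r_distr m_assoc a_ac)

lemma mat2_mult_one_left: "M \<in> mat2_over (carrier R) \<Longrightarrow> mat2_mult R (mat2_one R) M = M"
  by (cases M) (simp add: mat2_one_def)

lemma invertible_mat2_mult:
  assumes "A \<subseteq> carrier R" "B \<subseteq> carrier R" "invertible_mat2 R A M" "invertible_mat2 R B N"
  shows "invertible_mat2 R (carrier R) (mat2_mult R M N)"
proof -
  have "invertible_mat2 R (carrier R) M" "invertible_mat2 R (carrier R) N"
    using invertible_mat2_mono assms by blast+
  then obtain M' N' where M: "M \<in> mat2_over (carrier R)" "M' \<in> mat2_over (carrier R)"
    "mat2_mult R M M' = mat2_one R" "mat2_mult R M' M = mat2_one R"
    and N: "N \<in> mat2_over (carrier R)" "N' \<in> mat2_over (carrier R)"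
    "mat2_mult R N N' = mat2_one R" "mat2_mult R N' N = mat2_one R"
    unfolding invertible_mat2_iff by blast
  note closed = mat2_mult_closed[OF carrier_is_subring]
  have "mat2_mult R N (mat2_mult R N' M') = M'"
    using mat2_mult_assoc[OF N(1,2) M(2), symmetric] N(3) mat2_mult_one_left[OF M(2)] by simp
  then have right: "mat2_mult R (mat2_mult R M N) (mat2_mult R N' M') = mat2_one R"
    using mat2_mult_assoc[OF M(1) N(1) closed[OF N(2) M(2)]] M(3) by simp
  have "mat2_mult R M' (mat2_mult R M N) = N"
    using mat2_mult_assoc[OF M(2,1) N(1), symmetric] M(4) mat2_mult_one_left[OF N(1)] by simp
  then have left: "mat2_mult R (mat2_mult R N' M') (mat2_mult R M N) = mat2_one R"
    using mat2_mult_assoc[OF N(2) M(2) closed[OF M(1) N(1)]] N(4) by simp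
  show ?thesis
    unfolding invertible_mat2_iff using closed[OF M(1) N(1)] closed[OF N(2) M(2)] left right by blast
qed

end

lemma (in ring_hom_ring) mat2_map_mult:
  "M \<in> mat2_over (carrier R) \<Longrightarrow> N \<in> mat2_over (carrier R) \<Longrightarrow>
     mat2_map h (mat2_mult R M N) = mat2_mult S (mat2_map h M) (mat2_map h N)"
  by (cases M; cases N) simp

lemma (in ring_hom_ring) mat2_map_one: "mat2_map h (mat2_one R) = mat2_one S"
  by (simp add: mat2_one_def)

lemma (in ring_hom_ring) invertible_mat2_map:
  assumes "A \<subseteq> carrier R" "invertible_mat2 R A M"
  shows "invertible_mat2 S (h ` A) (mat2_map h M)"
proof -
  obtain M' where M: "M \<in> mat2_over A" "M' \<in> mat2_over A"
    and inv: "mat2_mult R M M' = mat2_one R" "mat2_mult R M' M = mat2_one R"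
    using assms(2) unfolding invertible_mat2_iff by blast
  have carr: "M \<in> mat2_over (carrier R)" "M' \<in> mat2_over (carrier R)"
    using M mat2_over_mono[OF assms(1)] by auto
  have "mat2_mult S (mat2_map h M) (mat2_map h M') = mat2_one S"
    "mat2_mult S (mat2_map h M') (mat2_map h M) = mat2_one S"
    using mat2_map_mult[OF carr] mat2_map_mult[OF carr(2,1)] inv mat2_map_one by simp_all
  moreover have "mat2_map h M \<in> mat2_over (h ` A)" "mat2_map h M' \<in> mat2_over (h ` A)"
    using M by (auto simp: mat2_over_image)
  ultimately show ?thesis
    unfolding invertible_mat2_iff by blast
qed

lemma (in ring_hom_ring) invertible_mat2_lift:
  assumes A: "subring A R" "inj_on h A" and N: "invertible_mat2 S (h ` A) N"
  shows "\<exists>M. N = mat2_map h M \<and> invertible_mat2 R A M"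
proof -
  obtain M M' where M: "M \<in> mat2_over A" "M' \<in> mat2_over A"
    and inv: "mat2_mult S (mat2_map h M) (mat2_map h M') = mat2_one S"
      "mat2_mult S (mat2_map h M') (mat2_map h M) = mat2_one S"
    and N_eq: "N = mat2_map h M"
    using N unfolding invertible_mat2_iff mat2_over_image by blast
  have carr: "M \<in> mat2_over (carrier R)" "M' \<in> mat2_over (carrier R)"
    using M mat2_over_mono[OF subringE(1)[OF A(1)]] by auto
  note closed = R.mat2_mult_closed[OF A(1)] R.mat2_one_closed[OF A(1)]
  have "mat2_mult R M M' = mat2_one R"
    using inj_onD[OF inj_on_mat2_map[OF A(2)] _ closed(1)[OF M] closed(2)]
      mat2_map_mult[OF carr] inv(1) mat2_map_one by simp
  moreover have "mat2_mult R M' M = mat2_one R"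
    using inj_onD[OF inj_on_mat2_map[OF A(2)] _ closed(1)[OF M(2,1)] closed(2)]
      mat2_map_mult[OF carr(2,1)] inv(2) mat2_map_one by simp
  ultimately show ?thesis using M N_eq unfolding invertible_mat2_iff by blast
qed

section \<open>Points, chains and the projective line\<close>

definition row_span :: "('a, 'b) ring_scheme \<Rightarrow> 'a mat2 \<Rightarrow> ('a \<times> 'a) set" where
  "row_span S M = (case M of (a, b, _, _) \<Rightarrow> lspan S a b)"

lemma chain_of_row_span: "chain_of S K g = {row_span S (mat2_mult S M g) | M. invertible_mat2 S K M}"
  by (cases g) (fastforce simp: chain_of_def row_span_def admissible_iff_invertible_mat2)

lemma admissible_carrier: "admissible S A a b \<Longrightarrow> a \<in> A \<and> b \<in> A"
  unfolding admissible_def invertible2_def by blast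

lemma admissible_unimodular: "admissible S A a b \<Longrightarrow> \<exists>x \<in> A. \<exists>y \<in> A. a \<otimes>\<^bsub>S\<^esub> x \<oplus>\<^bsub>S\<^esub> b \<otimes>\<^bsub>S\<^esub> y = \<one>\<^bsub>S\<^esub>"
  unfolding admissible_def invertible2_def by blast

lemma lspan_swap: "lspan S b a = prod.swap ` lspan S a b"
  unfolding lspan_def by auto

context ring
begin

lemma admissible_nonzero:
  assumes "\<one> \<noteq> \<zero>" "admissible R (carrier R) a b"
  shows "a \<noteq> \<zero> \<or> b \<noteq> \<zero>"
  using admissible_unimodular[OF assms(2)] assms(1) by auto

lemma admissible_one:
  assumes "c \<in> carrier R"
  shows "admissible R (carrier R) \<one> c"
proof -
  have "invertible_mat2 R (carrier R) (\<one>, c, \<zero>, \<one>)"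
    unfolding invertible_mat2_iff using assms
    by (intro conjI bexI[of _ "(\<one>, \<ominus> c, \<zero>, \<one>)"]) (auto simp: mat2_one_def r_neg l_neg)
  then show ?thesis unfolding admissible_iff_invertible_mat2 by blast
qed

lemma admissible_swap:
  assumes "admissible R (carrier R) a b"
  shows "admissible R (carrier R) b a"
proof -
  obtain c d where M: "invertible_mat2 R (carrier R) (a, b, c, d)"
    using assms unfolding admissible_iff_invertible_mat2 by blast
  have J: "invertible_mat2 R (carrier R) (\<zero>, \<one>, \<one>, \<zero>)"
    unfolding invertible_mat2_iff by (rule conjI, simp, rule bexI[of _ "(\<zero>, \<one>, \<one>, \<zero>)"]) (auto simp: mat2_one_def)
  have "mat2_mult R (a, b, c, d) (\<zero>, \<one>, \<one>, \<zero>) = (b, a, d, c)"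
    using invertible_mat2_carrier[OF M] by simp
  then have "invertible_mat2 R (carrier R) (b, a, d, c)"
    using invertible_mat2_mult[OF subset_refl subset_refl M J] by simp
  then show ?thesis unfolding admissible_iff_invertible_mat2 by blast
qed

lemma lspan_iff: "p \<in> lspan R a b \<longleftrightarrow> (\<exists>s \<in> carrier R. p = (s \<otimes> a, s \<otimes> b))"
  unfolding lspan_def by auto

lemma lspan_subset_carrier: "a \<in> carrier R \<Longrightarrow> b \<in> carrier R \<Longrightarrow> lspan R a b \<subseteq> carrier R \<times> carrier R"
  unfolding lspan_def by auto

lemma lspan_mult_subset:
  assumes "s \<in> carrier R" "a \<in> carrier R" "b \<in> carrier R"
  shows "lspan R (s \<otimes> a) (s \<otimes> b) \<subseteq> lspan R a b"
  using assms by (auto simp: lspan_iff m_assoc[symmetric] intro!: bexI[of _ "_ \<otimes> s"])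

lemma lspan_unit_mult:
  assumes "u \<in> Units R" "a \<in> carrier R" "b \<in> carrier R"
  shows "lspan R (u \<otimes> a) (u \<otimes> b) = lspan R a b"
proof
  show "lspan R (u \<otimes> a) (u \<otimes> b) \<subseteq> lspan R a b"
    using assms by (simp add: lspan_mult_subset Units_closed)
  have "lspan R (inv u \<otimes> (u \<otimes> a)) (inv u \<otimes> (u \<otimes> b)) \<subseteq> lspan R (u \<otimes> a) (u \<otimes> b)"
    using assms by (intro lspan_mult_subset) auto
  then show "lspan R a b \<subseteq> lspan R (u \<otimes> a) (u \<otimes> b)"
    using assms by (simp add: m_assoc[symmetric] Units_l_inv Units_closed)
qed

lemma lspan_eqD:
  assumes "lspan R a b = lspan R a' b'" "a' \<in> carrier R" "b' \<in> carrier R"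
  shows "\<exists>s \<in> carrier R. a' = s \<otimes> a \<and> b' = s \<otimes> b"
proof -
  have "(a', b') \<in> lspan R a b"
    unfolding assms(1) using assms(2,3) by (auto simp: lspan_iff intro!: bexI[of _ \<one>])
  then show ?thesis by (simp add: lspan_iff)
qed

lemma inj_on_lspan_one: "inj_on (lspan R \<one>) (carrier R)"
proof (rule inj_onI)
  fix x y assume "x \<in> carrier R" "y \<in> carrier R" "lspan R \<one> x = lspan R \<one> y"
  then obtain s where "s \<in> carrier R" "\<one> = s \<otimes> \<one>" "y = s \<otimes> x"
    using lspan_eqD by blast
  then have "s = \<one>" by simp
  with \<open>y = s \<otimes> x\<close> \<open>x \<in> carrier R\<close> show "x = y" by simp
qed

lemma proj_line_finite:
  assumes "finite (carrier R)"
  shows "finite (proj_line R)"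
proof -
  have "proj_line R \<subseteq> Pow (carrier R \<times> carrier R)"
  proof
    fix p assume "p \<in> proj_line R"
    then obtain a b where "p = lspan R a b" "admissible R (carrier R) a b"
      unfolding proj_line_def by blast
    then show "p \<in> Pow (carrier R \<times> carrier R)"
      using lspan_subset_carrier[of a b] admissible_carrier[of R "carrier R" a b] by simp
  qed
  then show ?thesis using assms by (simp add: finite_subset)
qed

end

lemma (in ring_hom_ring) lspan_hom_cong:
  assumes "lspan R a b = lspan R a' b'"
    and "a \<in> carrier R" "b \<in> carrier R" "a' \<in> carrier R" "b' \<in> carrier R"
  shows "lspan S (h a) (h b) = lspan S (h a') (h b')"
proof -
  obtain s where s: "s \<in> carrier R" "a' = s \<otimes>\<^bsub>R\<^esub> a" "b' = s \<otimes>\<^bsub>R\<^esub> b"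
    using R.lspan_eqD[OF assms(1,4,5)] by blast
  obtain t where t: "t \<in> carrier R" "a = t \<otimes>\<^bsub>R\<^esub> a'" "b = t \<otimes>\<^bsub>R\<^esub> b'"
    using R.lspan_eqD[OF assms(1)[symmetric] assms(2,3)] by blast
  have "lspan S (h a') (h b') \<subseteq> lspan S (h a) (h b)"
    using S.lspan_mult_subset[of "h s" "h a" "h b"] s assms by simp
  moreover have "lspan S (h a) (h b) \<subseteq> lspan S (h a') (h b')"
    using S.lspan_mult_subset[of "h t" "h a'" "h b'"] t assms by simp
  ultimately show ?thesis by blast
qed

lemma (in ring_hom_ring) hom_Units:
  assumes "x \<in> Units R"
  shows "h x \<in> Units S"
proof -
  have "h (inv\<^bsub>R\<^esub> x) \<otimes>\<^bsub>S\<^esub> h x = \<one>\<^bsub>S\<^esub>" "h x \<otimes>\<^bsub>S\<^esub> h (inv\<^bsub>R\<^esub> x) = \<one>\<^bsub>S\<^esub>"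
    using assms by (metis R.Units_closed R.Units_inv_closed R.Units_l_inv R.Units_r_inv hom_mult hom_one)+
  then show ?thesis
    using hom_closed[OF R.Units_closed[OF assms]] hom_closed[OF R.Units_inv_closed[OF assms]]
    unfolding Units_def by blast
qed

section \<open>Counting a vector space over a finite subfield\<close>

context ring
begin

lemma line_extension_inj:
  assumes K: "subfield K R" and E: "dimension n K E" and v: "v \<in> carrier R" "v \<notin> E"
  shows "inj_on (\<lambda>(k, e). k \<otimes> v \<oplus> e) (K \<times> E)"
proof (rule inj_onI, clarify)
  fix k e k' e' assume k: "k \<in> K" "e \<in> E" "k' \<in> K" "e' \<in> E" and eq: "k \<otimes> v \<oplus> e = k' \<otimes> v \<oplus> e'"
  have c: "k \<in> carrier R" "k' \<in> carrier R" "e \<in> carrier R" "e' \<in> carrier R"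
    using k subfieldE(3)[OF K] space_subgroup_props(1)[OF K E] by auto
  have "(k \<ominus> k') \<otimes> v = k \<otimes> v \<ominus> k' \<otimes> v"
    using c v by (simp add: l_minus minus_eq l_distr)
  also have "\<dots> = (k \<otimes> v \<oplus> e) \<ominus> e \<ominus> k' \<otimes> v"
    using c v by (simp add: minus_eq a_assoc r_neg)
  also have "\<dots> = (k' \<otimes> v \<oplus> e') \<ominus> e \<ominus> k' \<otimes> v"
    by (simp only: eq)
  also have "\<dots> = e' \<ominus> e"
    using c v by (simp add: minus_eq a_ac r_neg)
  finally have "(k \<ominus> k') \<otimes> v \<in> E"
    using space_subgroup_props(3,4)[OF K E] k by (simp add: minus_eq)
  moreover have "k \<ominus> k' \<in> K"
    using subringE(5,7)[OF subfieldE(1)[OF K]] k by (simp add: minus_eq)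
  ultimately have "k \<ominus> k' = \<zero>"
    using space_subgroup_props(6)[OF K E, of "k \<ominus> k'" v] v by force
  then have "k = k'"
    using c by (metis minus_equality r_right_minus_eq)
  with eq c v show "k = k' \<and> e = e'" by simp
qed

lemma subfield_Units:
  assumes "subfield K R" "k \<in> K" "k \<noteq> \<zero>"
  shows "k \<in> Units R"
proof -
  have "inv k \<in> K" "k \<otimes> inv k = \<one>" "inv k \<otimes> k = \<one>"
    using subfield_m_inv[OF assms(1), of k] assms(2,3) by auto
  then show ?thesis
    using subfieldE(3)[OF assms(1)] assms(2) unfolding Units_def by blast
qed

lemma dimension_card:
  assumes "dimension n K E" "subfield K R"
  shows "card E = card K ^ n"
  using assms
proof (induction n K E rule: dimension.induct)
  case (Suc_dim v E n K)
  have "line_extension K v E = (\<lambda>(k, e). k \<otimes> v \<oplus> e) ` (K \<times> E)"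
    unfolding set_eq_iff by (auto simp: line_extension_mem_iff)
  then have "card (line_extension K v E) = card (K \<times> E)"
    using card_image[OF line_extension_inj[OF Suc_dim(5,3,1,2)]] by simp
  then show ?case using Suc_dim by (simp add: card_cartesian_product)
qed simp

end

section \<open>Lifting blocking sets along the residue map of a local ring\<close>

locale local_quotient = ideal I R for I and R (structure) +
  assumes nonunits_eq: "I = carrier R - Units R"
begin

abbreviation F where "F \<equiv> R Quot I"
abbreviation residue where "residue \<equiv> a_r_coset R I"

lemma residue_hom: "ring_hom_ring R F residue"
  by (rule rcos_ring_hom_ring)

lemma carrier_F: "carrier F = residue ` carrier R"
  unfolding FactRing_def A_RCOSETS_def' by auto

lemma zero_F: "\<zero>\<^bsub>F\<^esub> = I"
  by (simp add: FactRing_def)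

lemma residue_eq_zero_iff: "x \<in> carrier R \<Longrightarrow> residue x = \<zero>\<^bsub>F\<^esub> \<longleftrightarrow> x \<in> I"
  using rcos_const_imp_mem a_rcos_const by (auto simp: zero_F)

lemma residue_mem_iff:
  assumes c: "c \<in> carrier R"
  shows "x \<in> residue c \<longleftrightarrow> x \<in> carrier R \<and> residue x = residue c"
proof
  assume x: "x \<in> residue c"
  then show "x \<in> carrier R \<and> residue x = residue c"
    using a_r_coset_subset_G[OF a_subset c] a_repr_independence'[OF x c] by auto
qed (use a_rcos_self in auto)

lemma card_residue:
  assumes "c \<in> carrier R"
  shows "card (residue c) = card I"
proof -
  have "residue c = (\<lambda>i. i \<oplus> c) ` I"
    by (auto simp: a_r_coset_def')
  moreover have "inj_on (\<lambda>i. i \<oplus> c) I"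
  proof (rule inj_onI)
    fix i j assume "i \<in> I" "j \<in> I" "i \<oplus> c = j \<oplus> c"
    then show "i = j" using add.right_cancel[OF assms] a_subset by blast
  qed
  ultimately show ?thesis by (simp add: card_image)
qed

lemma residue_nonzero_unit: "x \<in> carrier R \<Longrightarrow> residue x \<noteq> \<zero>\<^bsub>F\<^esub> \<Longrightarrow> x \<in> Units R"
  using residue_eq_zero_iff nonunits_eq by blast

lemma one_notin_nonunits: "\<one> \<notin> I"
  using nonunits_eq by simp

lemma one_F_neq_zero: "\<one>\<^bsub>F\<^esub> \<noteq> \<zero>\<^bsub>F\<^esub>"
proof -
  interpret residue: ring_hom_ring R F residue by (rule residue_hom)
  show ?thesis
    using residue_eq_zero_iff[OF one_closed] one_notin_nonunits residue.hom_one by simp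
qed

lemma inj_on_residue:
  assumes K: "subfield K R"
  shows "inj_on residue K"
proof (rule inj_onI)
  fix x y assume xy: "x \<in> K" "y \<in> K" "residue x = residue y"
  have Kc: "K \<subseteq> carrier R" using subfieldE(3)[OF K] .
  have "x \<ominus> y \<in> I"
    using xy Kc residue_mem_iff[of y x] a_rcos_module_minus[OF ring_axioms, of y x] by auto
  moreover have "x \<ominus> y \<in> K"
    using subringE(5,7)[OF subfieldE(1)[OF K]] xy by (simp add: minus_eq)
  ultimately have "x \<ominus> y = \<zero>"
    using subfield_Units[OF K] nonunits_eq by blast
  then show "x = y" using xy Kc by (simp add: r_right_minus_eq subsetD)
qed

definition fibre :: "('a set \<times> 'a set) set \<Rightarrow> ('a \<times> 'a) set set" where
  "fibre P = {lspan R a b | a b. admissible R (carrier R) a b \<and> lspan F (residue a) (residue b) = P}"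

lemma fibre_subset: "fibre P \<subseteq> proj_line R"
  unfolding fibre_def proj_line_def by blast

lemma row_span_in_fibre:
  "invertible_mat2 R (carrier R) M \<Longrightarrow> row_span R M \<in> fibre (row_span F (mat2_map residue M))"
  by (cases M) (auto simp: fibre_def row_span_def admissible_iff_invertible_mat2)

lemma fibres_disjoint:
  assumes "P \<noteq> Q"
  shows "fibre P \<inter> fibre Q = {}"
proof (rule ccontr)
  interpret residue: ring_hom_ring R F residue by (rule residue_hom)
  assume "fibre P \<inter> fibre Q \<noteq> {}"
  then obtain a b a' b' where ab: "admissible R (carrier R) a b" "admissible R (carrier R) a' b'"
    and PQ: "lspan F (residue a) (residue b) = P" "lspan F (residue a') (residue b') = Q"
    and eq: "lspan R a b = lspan R a' b'"
    unfolding fibre_def by blast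
  have "lspan F (residue a) (residue b) = lspan F (residue a') (residue b')"
    using residue.lspan_hom_cong[OF eq] admissible_carrier[OF ab(1)] admissible_carrier[OF ab(2)] by blast
  then show False using PQ assms by simp
qed

lemma fibre_one:
  assumes c: "c \<in> carrier R"
  shows "fibre (lspan F \<one>\<^bsub>F\<^esub> (residue c)) = lspan R \<one> ` residue c"
proof
  interpret residue: ring_hom_ring R F residue by (rule residue_hom)
  show "lspan R \<one> ` residue c \<subseteq> fibre (lspan F \<one>\<^bsub>F\<^esub> (residue c))"
  proof (rule image_subsetI)
    fix x assume "x \<in> residue c"
    then have "x \<in> carrier R" "residue x = residue c" using residue_mem_iff[OF c] by auto
    then show "lspan R \<one> x \<in> fibre (lspan F \<one>\<^bsub>F\<^esub> (residue c))"
      unfolding fibre_def using admissible_one residue.hom_one by force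
  qed
  show "fibre (lspan F \<one>\<^bsub>F\<^esub> (residue c)) \<subseteq> lspan R \<one> ` residue c"
  proof
    fix p assume "p \<in> fibre (lspan F \<one>\<^bsub>F\<^esub> (residue c))"
    then obtain a b where adm: "admissible R (carrier R) a b" and p: "p = lspan R a b"
      and P: "lspan F (residue a) (residue b) = lspan F \<one>\<^bsub>F\<^esub> (residue c)"
      unfolding fibre_def by blast
    have ab: "a \<in> carrier R" "b \<in> carrier R"
      using admissible_carrier[OF adm] by auto
    have F_carr: "residue a \<in> carrier F" "residue b \<in> carrier F" "residue c \<in> carrier F"
      using ab c by simp_all
    obtain t where t: "t \<in> carrier F" "\<one>\<^bsub>F\<^esub> = t \<otimes>\<^bsub>F\<^esub> residue a"
      using residue.S.lspan_eqD[OF P residue.S.one_closed F_carr(3)] by blast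
    have "residue a \<noteq> \<zero>\<^bsub>F\<^esub>"
    proof
      assume "residue a = \<zero>\<^bsub>F\<^esub>"
      with t have "\<one>\<^bsub>F\<^esub> = \<zero>\<^bsub>F\<^esub>" by simp
      with one_F_neq_zero show False ..
    qed
    then have a: "a \<in> Units R"
      using residue_nonzero_unit[OF ab(1)] by blast
    obtain s where "s \<in> carrier F" "residue a = s \<otimes>\<^bsub>F\<^esub> \<one>\<^bsub>F\<^esub>" "residue b = s \<otimes>\<^bsub>F\<^esub> residue c"
      using residue.S.lspan_eqD[OF P[symmetric] F_carr(1,2)] by blast
    then have b: "residue b = residue a \<otimes>\<^bsub>F\<^esub> residue c" by simp
    have "residue (inv a \<otimes> b) = residue (inv a) \<otimes>\<^bsub>F\<^esub> (residue a \<otimes>\<^bsub>F\<^esub> residue c)"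
      using a ab(2) b by simp
    also have "\<dots> = (residue (inv a) \<otimes>\<^bsub>F\<^esub> residue a) \<otimes>\<^bsub>F\<^esub> residue c"
      using a F_carr by (simp add: residue.S.m_assoc)
    also have "\<dots> = residue c"
      using a F_carr by (simp add: Units_closed flip: residue.hom_mult)
    finally have "inv a \<otimes> b \<in> residue c"
      using a ab c by (simp add: residue_mem_iff)
    moreover have "p = lspan R \<one> (inv a \<otimes> b)"
      using lspan_unit_mult[OF a, of \<one> "inv a \<otimes> b"] a ab p
      by (simp add: m_assoc[symmetric] Units_r_inv)
    ultimately show "p \<in> lspan R \<one> ` residue c" by blast
  qed
qed

lemma card_fibre_unit:
  assumes a: "a \<in> Units R" and b: "b \<in> carrier R"
  shows "card (fibre (lspan F (residue a) (residue b))) = card I"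
proof -
  interpret residue: ring_hom_ring R F residue by (rule residue_hom)
  define c where "c = inv a \<otimes> b"
  have c: "c \<in> carrier R" using a b by (simp add: c_def)
  have "a \<otimes> c = b"
    using a b unfolding c_def by (metis Units_closed Units_inv_closed Units_r_inv l_one m_assoc)
  then have "residue b = residue a \<otimes>\<^bsub>F\<^esub> residue c"
    using residue.hom_mult a c by auto
  then have "lspan F (residue a) (residue b) = lspan F \<one>\<^bsub>F\<^esub> (residue c)"
    using residue.S.lspan_unit_mult[OF residue.hom_Units[OF a], of "\<one>\<^bsub>F\<^esub>" "residue c"] c
      residue.S.r_one[OF residue.hom_closed[OF Units_closed[OF a]]] by simp
  moreover have "residue c \<subseteq> carrier R"
    using residue_mem_iff[OF c] by blast
  ultimately show ?thesis
    using fibre_one[OF c] card_image[OF inj_on_subset[OF inj_on_lspan_one]] card_residue[OF c] by simp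
qed

lemma fibre_swap: "fibre (prod.swap ` P) = image prod.swap ` fibre P"
proof -
  have swap: "image prod.swap ` fibre P \<subseteq> fibre (prod.swap ` P)" for P
    unfolding fibre_def by (auto simp: lspan_swap[symmetric]) (blast intro: admissible_swap)
  show ?thesis
  proof
    show "fibre (prod.swap ` P) \<subseteq> image prod.swap ` fibre P"
    proof
      fix p assume "p \<in> fibre (prod.swap ` P)"
      then have "prod.swap ` p \<in> fibre P"
        using swap[of "prod.swap ` P"] by (auto simp: image_image)
      moreover have "p = prod.swap ` prod.swap ` p" by (simp add: image_image)
      ultimately show "p \<in> image prod.swap ` fibre P" by blast
    qed
  qed (rule swap)
qed

lemma card_fibre:
  assumes "P \<in> proj_line F"
  shows "card (fibre P) = card I"
proof -
  interpret residue: ring_hom_ring R F residue by (rule residue_hom)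
  obtain \<alpha> \<beta> where P: "P = lspan F \<alpha> \<beta>" and adm: "admissible F (carrier F) \<alpha> \<beta>"
    using assms unfolding proj_line_def by blast
  obtain a b where ab: "a \<in> carrier R" "b \<in> carrier R" "\<alpha> = residue a" "\<beta> = residue b"
    using admissible_carrier[OF adm] unfolding carrier_F by blast
  have "residue a \<noteq> \<zero>\<^bsub>F\<^esub> \<or> residue b \<noteq> \<zero>\<^bsub>F\<^esub>"
    using residue.S.admissible_nonzero[OF one_F_neq_zero adm] ab by simp
  then consider "a \<in> Units R" | "b \<in> Units R"
    using residue_nonzero_unit ab by blast
  then show ?thesis
  proof cases
    case 1
    then show ?thesis using card_fibre_unit ab P by simp
  next
    case 2
    have "P = prod.swap ` lspan F (residue b) (residue a)"
      using P ab lspan_swap[of F "residue a" "residue b"] by simp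
    then have "fibre P = image prod.swap ` fibre (lspan F (residue b) (residue a))"
      by (simp only: fibre_swap)
    then show ?thesis
      using card_image[OF inj_on_image[OF inj_swap], of "fibre (lspan F (residue b) (residue a))"]
        card_fibre_unit[OF 2 ab(1)] by simp
  qed
qed

lemma card_Union_fibres:
  assumes "finite (carrier R)" "B \<subseteq> proj_line F"
  shows "card (\<Union>P\<in>B. fibre P) = card B * card I"
proof -
  interpret residue: ring_hom_ring R F residue by (rule residue_hom)
  have "finite (proj_line F)"
    using residue.S.proj_line_finite assms(1) carrier_F by simp
  then have "finite B" using assms(2) finite_subset by blast
  moreover have "finite (fibre P)" for P
    using fibre_subset proj_line_finite[OF assms(1)] finite_subset by blast
  ultimately have "card (\<Union>P\<in>B. fibre P) = (\<Sum>P\<in>B. card (fibre P))"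
    using fibres_disjoint by (intro card_UN_disjoint) auto
  also have "\<dots> = card B * card I"
    using card_fibre assms(2) by (simp add: subset_iff)
  finally show ?thesis .
qed

lemma blocking_set_Union_fibres:
  assumes K: "subfield K R" and B: "blocking_set F (residue ` K) B"
  shows "blocking_set R K (\<Union>P\<in>B. fibre P)"
proof -
  interpret residue: ring_hom_ring R F residue by (rule residue_hom)
  have Kc: "K \<subseteq> carrier R" using subfieldE(3)[OF K] .
  have "C \<inter> (\<Union>P\<in>B. fibre P) \<noteq> {}" if chain: "C \<in> chains R K" for C
  proof -
    obtain g where g: "invertible_mat2 R (carrier R) g" and C: "C = chain_of R K g"
      using chain unfolding chains_def GL2_eq_invertible_mat2 by blast
    have "invertible_mat2 F (carrier F) (mat2_map residue g)"
      using residue.invertible_mat2_map[OF subset_refl g] carrier_F by simp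
    then have "chain_of F (residue ` K) (mat2_map residue g) \<in> chains F (residue ` K)"
      unfolding chains_def GL2_eq_invertible_mat2 by (intro imageI CollectI)
    then obtain P where "P \<in> B" "P \<in> chain_of F (residue ` K) (mat2_map residue g)"
      using B unfolding blocking_set_def by blast
    then obtain N where N: "invertible_mat2 F (residue ` K) N"
      and P: "row_span F (mat2_mult F N (mat2_map residue g)) \<in> B"
      unfolding chain_of_row_span by blast
    obtain k where k: "N = mat2_map residue k" "invertible_mat2 R K k"
      using residue.invertible_mat2_lift[OF subfieldE(1)[OF K] inj_on_residue[OF K] N] by blast
    have kg: "invertible_mat2 R (carrier R) (mat2_mult R k g)"
      using invertible_mat2_mult[OF Kc subset_refl k(2) g] .
    have "row_span R (mat2_mult R k g) \<in> C"
      unfolding C chain_of_row_span using k(2) by blast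
    moreover have "mat2_map residue (mat2_mult R k g) = mat2_mult F N (mat2_map residue g)"
      using residue.mat2_map_mult mat2_over_mono[OF Kc] invertible_mat2_carrier[OF k(2)]
        invertible_mat2_carrier[OF g] k(1) by blast
    then have "row_span R (mat2_mult R k g) \<in> (\<Union>P\<in>B. fibre P)"
      using row_span_in_fibre[OF kg] P by auto
    ultimately show ?thesis by blast
  qed
  then show ?thesis
    using B fibre_subset unfolding blocking_set_def by blast
qed

end

theorem mainTheorem5:
  fixes R :: "('a, 'b) ring_scheme" and K :: "'a set" and q x \<delta> :: nat
  assumes "ring R"
    and "finite (carrier R)"
    and "local_ring R"
    and "prime_power q"
    and "subfield K R"
    and "card K = q"
    and "ring.dimension R \<delta> K (carrier R - Units R)"
    and "\<exists>B. blocking_set (R Quot (carrier R - Units R))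
               ((\<lambda>k. (carrier R - Units R) +>\<^bsub>R\<^esub> k) ` K) B \<and> card B = x"
  shows "\<exists>B. blocking_set R K B \<and> card B = x * q ^ \<delta>"
proof -
  have "ideal (carrier R - Units R) R"
    using assms(3) unfolding local_ring_def by blast
  then interpret local_quotient "carrier R - Units R" R
    by (rule local_quotient.intro) (simp add: local_quotient_axioms_def)
  obtain B where B: "blocking_set F (residue ` K) B" "card B = x"
    using assms(8) by blast
  have "card (carrier R - Units R) = q ^ \<delta>"
    using dimension_card[OF assms(7,5)] assms(6) by simp
  then have "card (\<Union>P\<in>B. fibre P) = x * q ^ \<delta>"
    using card_Union_fibres[OF assms(2)] B unfolding blocking_set_def by simp
  then show ?thesis
    using blocking_set_Union_fibres[OF assms(5) B(1)] by blast
qed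

end
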